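(* Let $p\ge 2$ be an integer. For every integer $n\ge 10^{p-1}+9$ and all $a,b\in\{0,\dots,9\}$ with $a<b$, we have $P_{(a,n,p)}>P_{(b,n,p)}$.
   Context: For an integer $x\ge 10^{p-1}$, the "$p$-th digit of $x$" is the $p$-th digit of its decimal expansion counted from the left. For $d\in\{0,\dots,9\}$ and $m\ge 10^{p-1}$, let $N_d(m)$ be the number of integers $x$ with $10^{p-1}\le x\le m$ whose $p$-th digit is $d$. For $n\ge 10^{p-1}$, $$P_{(d,n,p)}=\frac{1}{n+1-10^{p-1}}\sum_{m=10^{p-1}}^{n}\frac{N_d(m)}{m+1-10^{p-1}},$$ which is the probability that the $p$-th digit of $x$ is $d$ when $m$ is chosen uniformly in $\{10^{p-1},\dots,n\}$ and then $x$ uniformly in $\{10^{p-1},\dots,m\}$. *)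

theory Defs
  imports Complex_Main
begin

definition ndigits :: "nat \<Rightarrow> nat" where
  "ndigits x = (LEAST k. x < 10 ^ k)"

text \<open>The p-th decimal digit of x counted from the left (p \<ge> 1, meaningful when x \<ge> 10^(p-1)).\<close>
definition pth_digit :: "nat \<Rightarrow> nat \<Rightarrow> nat" where
  "pth_digit p x = (x div 10 ^ (ndigits x - p)) mod 10"

definition Ncount :: "nat \<Rightarrow> nat \<Rightarrow> nat \<Rightarrow> nat" where
  "Ncount p d m = card {x \<in> {10 ^ (p - 1)..m}. pth_digit p x = d}"

definition Pdig :: "nat \<Rightarrow> nat \<Rightarrow> nat \<Rightarrow> real" where
  "Pdig d n p = (1 / real (n + 1 - 10 ^ (p - 1))) *
     (\<Sum>m = 10 ^ (p - 1)..n. real (Ncount p d m) / real (m + 1 - 10 ^ (p - 1)))"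

end

theory Submission
  imports Defs
begin

text \<open>
  Subtracting \<open>(b - a) * 10 ^ (k - p)\<close> from a \<open>k\<close>-digit number whose \<open>p\<close>-th digit is \<open>b\<close>
  turns that digit into \<open>a\<close>; since \<open>p \<ge> 2\<close> the leading digit is untouched, so the number of
  digits is preserved and the map is injective. Hence \<open>N\<^sub>b(m) \<le> N\<^sub>a(m)\<close> for every \<open>m\<close>, with
  strict inequality at \<open>m = 10^(p-1) + a\<close>, where the \<open>p\<close>-th digits run through \<open>0, \<dots>, a\<close>.
  Averaging twice with positive weights keeps the strict inequality.
\<close>

lemma ndigits_le_iff: "ndigits x \<le> j \<longleftrightarrow> x < 10 ^ j"
proof
  have "x < 10 ^ ndigits x"
    unfolding ndigits_def by (rule LeastI[of _ x]) (induction x, auto)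
  moreover assume "ndigits x \<le> j"
  ultimately show "x < 10 ^ j"
    using power_increasing[of "ndigits x" j "10::nat"] by linarith
next
  assume "x < 10 ^ j"
  then show "ndigits x \<le> j"
    unfolding ndigits_def by (rule Least_le)
qed

lemma le_ndigits_iff:
  assumes "k \<ge> 1"
  shows "k \<le> ndigits x \<longleftrightarrow> 10 ^ (k - 1) \<le> x"
  using ndigits_le_iff[of x "k - 1"] assms by auto

lemma ndigits_eqI:
  assumes "k \<ge> 1" "10 ^ (k - 1) \<le> x" "x < 10 ^ k"
  shows "ndigits x = k"
  using assms ndigits_le_iff[of x k] le_ndigits_iff[of k x] by simp

lemma sub_le_last_digit:
  fixes q :: nat
  assumes "p \<ge> 2" "10 ^ (p - 1) \<le> q" "c \<le> q mod 10"
  shows "10 ^ (p - 1) \<le> q - c" and "(q - c) mod 10 = q mod 10 - c"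
proof -
  have split: "q - c = (q mod 10 - c) + 10 * (q div 10)"
    using assms(3) div_mult_mod_eq[of q 10] by linarith
  have "(10::nat) ^ (p - 1) = 10 * 10 ^ (p - 2)"
    using assms(1) by (simp flip: power_Suc)
  then have "10 ^ (p - 2) \<le> q div 10"
    using assms(2) by (simp add: less_eq_div_iff_mult_less_eq mult.commute)
  then show "10 ^ (p - 1) \<le> q - c"
    unfolding split \<open>10 ^ (p - 1) = 10 * 10 ^ (p - 2)\<close> by simp
  show "(q - c) mod 10 = q mod 10 - c"
    unfolding split by simp
qed

definition lower_pth_digit :: "nat \<Rightarrow> nat \<Rightarrow> nat \<Rightarrow> nat" where
  "lower_pth_digit p c x = x - c * 10 ^ (ndigits x - p)"

lemma lower_pth_digit:
  assumes p: "p \<ge> 2" and x: "10 ^ (p - 1) \<le> x" and c: "c \<le> pth_digit p x"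
  shows "ndigits (lower_pth_digit p c x) = ndigits x"
    and "pth_digit p (lower_pth_digit p c x) = pth_digit p x - c"
    and "lower_pth_digit p c x + c * 10 ^ (ndigits x - p) = x"
proof -
  define k where "k = ndigits x"
  define e where "e = (10::nat) ^ (k - p)"
  define q where "q = x div e"
  have "p \<le> k" using le_ndigits_iff[of p x] p x unfolding k_def by simp
  then have place: "10 ^ (k - 1) = 10 ^ (p - 1) * e"
    unfolding e_def using p by (simp flip: power_add)
  have "e > 0" unfolding e_def by simp
  have digit: "pth_digit p x = q mod 10" unfolding q_def e_def k_def pth_digit_def ..
  have "10 ^ (k - 1) \<le> x" using le_ndigits_iff[of k x] \<open>p \<le> k\<close> p unfolding k_def by simp
  then have "10 ^ (p - 1) \<le> q"
    unfolding q_def place using \<open>e > 0\<close> by (simp add: less_eq_div_iff_mult_less_eq)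
  note last_digit = sub_le_last_digit[OF p this c[unfolded digit]]
  have split: "x = q * e + x mod e" unfolding q_def by simp
  have "c * e \<le> q * e"
    using c digit mod_less_eq_dividend[of q 10] by (intro mult_le_mono1) linarith
  then show "lower_pth_digit p c x + c * 10 ^ (ndigits x - p) = x"
    unfolding lower_pth_digit_def k_def[symmetric] e_def[symmetric]
    using split by (metis le_add1 le_add_diff_inverse2 order.trans)
  have lowered: "lower_pth_digit p c x = (q - c) * e + x mod e"
    unfolding lower_pth_digit_def k_def[symmetric] e_def[symmetric]
    using \<open>c * e \<le> q * e\<close> by (subst (1) split) (simp add: diff_mult_distrib)
  have "10 ^ (k - 1) \<le> lower_pth_digit p c x"
    unfolding lowered place using mult_le_mono1[OF last_digit(1), of e] by linarith
  moreover have "lower_pth_digit p c x < 10 ^ k"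
    using ndigits_le_iff[of x k] unfolding k_def lower_pth_digit_def by simp
  ultimately show nd: "ndigits (lower_pth_digit p c x) = ndigits x"
    using ndigits_eqI \<open>p \<le> k\<close> p unfolding k_def by simp
  have "lower_pth_digit p c x div e = q - c" unfolding lowered using \<open>e > 0\<close> by simp
  then show "pth_digit p (lower_pth_digit p c x) = pth_digit p x - c"
    unfolding digit pth_digit_def nd k_def[symmetric] e_def[symmetric] q_def[symmetric]
    using last_digit(2) by simp
qed

lemma inj_on_lower_pth_digit:
  assumes "p \<ge> 2"
  shows "inj_on (lower_pth_digit p c) {x. 10 ^ (p - 1) \<le> x \<and> c \<le> pth_digit p x}"
proof (rule inj_onI)
  fix x y
  assume "x \<in> {x. 10 ^ (p - 1) \<le> x \<and> c \<le> pth_digit p x}"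
    and "y \<in> {x. 10 ^ (p - 1) \<le> x \<and> c \<le> pth_digit p x}"
    and eq: "lower_pth_digit p c x = lower_pth_digit p c y"
  then have "ndigits x = ndigits y"
    using lower_pth_digit(1)[OF assms] by (metis mem_Collect_eq)
  then show "x = y"
    using lower_pth_digit(3)[OF assms] eq \<open>x \<in> _\<close> \<open>y \<in> _\<close> by (metis mem_Collect_eq)
qed

lemma Ncount_antimono_digit:
  assumes p: "p \<ge> 2" and "a \<le> b"
  shows "Ncount p b m \<le> Ncount p a m"
proof -
  let ?f = "lower_pth_digit p (b - a)"
  have "inj_on ?f {x \<in> {10 ^ (p - 1)..m}. pth_digit p x = b}"
    by (rule inj_on_subset[OF inj_on_lower_pth_digit[OF p]]) auto
  moreover have "?f ` {x \<in> {10 ^ (p - 1)..m}. pth_digit p x = b}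
      \<subseteq> {x \<in> {10 ^ (p - 1)..m}. pth_digit p x = a}"
  proof (rule image_subsetI)
    fix x assume "x \<in> {x \<in> {10 ^ (p - 1)..m}. pth_digit p x = b}"
    then have x: "10 ^ (p - 1) \<le> x" "x \<le> m" "pth_digit p x = b" by simp_all
    then have "b - a \<le> pth_digit p x" by simp
    note lowered = lower_pth_digit[OF p x(1) this]
    have "?f x \<le> x" unfolding lower_pth_digit_def by simp
    moreover have "10 ^ (p - 1) \<le> ?f x"
      using le_ndigits_iff[of p] x(1) p lowered(1) by (metis one_le_numeral order.trans)
    moreover have "pth_digit p (?f x) = a" using lowered(2) x(3) \<open>a \<le> b\<close> by simp
    ultimately show "?f x \<in> {x \<in> {10 ^ (p - 1)..m}. pth_digit p x = a}" using x by simp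
  qed
  ultimately show ?thesis
    unfolding Ncount_def by (rule card_inj_on_le) simp
qed

lemma pth_digit_power_add:
  assumes "p \<ge> 2" and "j \<le> 9"
  shows "pth_digit p (10 ^ (p - 1) + j) = j"
proof -
  have L: "(10::nat) ^ (p - 1) = 10 * 10 ^ (p - 2)" and "(10::nat) ^ p = 10 * 10 ^ (p - 1)"
    using assms(1) by (simp_all flip: power_Suc)
  moreover have "(10::nat) ^ (p - 2) > 0" by simp
  ultimately have "ndigits (10 ^ (p - 1) + j) = p"
    using assms by (intro ndigits_eqI) linarith+
  then show ?thesis
    unfolding pth_digit_def using L assms(2) by simp
qed

lemma Ncount_first_block_less:
  assumes p: "p \<ge> 2" and "a < b" "a \<le> 9"
  shows "Ncount p b (10 ^ (p - 1) + a) < Ncount p a (10 ^ (p - 1) + a)"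
proof -
  let ?L = "(10::nat) ^ (p - 1)"
  have digit: "pth_digit p x = x - ?L" if "x \<in> {?L..?L + a}" for x
    using pth_digit_power_add[OF p, of "x - ?L"] that assms(3) by auto
  then have "{x \<in> {?L..?L + a}. pth_digit p x = b} = {}"
    using \<open>a < b\<close> by fastforce
  then have "Ncount p b (?L + a) = 0" unfolding Ncount_def by (simp only: card.empty)
  moreover have "?L + a \<in> {x \<in> {?L..?L + a}. pth_digit p x = a}"
    using digit by simp
  then have "Ncount p a (?L + a) > 0" unfolding Ncount_def by (intro card_gt_0_iff[THEN iffD2]) auto
  ultimately show ?thesis by simp
qed

theorem proposition3:
  fixes p n a b :: nat
  assumes "p \<ge> 2" and "n \<ge> 10 ^ (p - 1) + 9"
    and "a \<le> 9" and "b \<le> 9" and "a < b"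
  shows "Pdig a n p > Pdig b n p"
proof -
  let ?L = "(10::nat) ^ (p - 1)"
  let ?S = "\<lambda>d. \<Sum>m = ?L..n. real (Ncount p d m) / real (m + 1 - ?L)"
  have "?S b < ?S a"
  proof (rule sum_strict_mono_ex1)
    show "\<forall>m\<in>{?L..n}. real (Ncount p b m) / real (m + 1 - ?L)
        \<le> real (Ncount p a m) / real (m + 1 - ?L)"
      using Ncount_antimono_digit[OF assms(1), of a b] assms(5)
      by (intro ballI divide_right_mono of_nat_mono) (simp_all del: of_nat_diff)
    show "\<exists>m\<in>{?L..n}. real (Ncount p b m) / real (m + 1 - ?L)
        < real (Ncount p a m) / real (m + 1 - ?L)"
      using Ncount_first_block_less[OF assms(1,5,3)] assms(2,3)
      by (intro bexI[of _ "?L + a"]) (simp_all add: divide_strict_right_mono)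
  qed simp
  moreover have "real (n + 1 - ?L) > 0" using assms(2) by (simp del: of_nat_diff)
  ultimately show ?thesis
    unfolding Pdig_def by (intro mult_strict_left_mono) (simp_all del: of_nat_diff)
qed

end
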